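(* Let $M(s,t)=C s^{-\alpha}(t-s)^{-\beta}$ with $C>0$, $\alpha,\beta\ge 0$ (a local factor). Let $t>0$ and let $\rho\in\mathcal B^-$ be a Bruno sequence with $\rho_n<1/2$ for all $n$. Put $s_n=t\hat\rho_n$. Then the sequence $\big(M(s_{n+1},s_n)\big)_{n\ge0}$ is bounded by a geometric sequence, i.e. there exist constants $K>0$ and $q>0$ with $M(s_{n+1},s_n)\le K q^n$ for all $n$.
   Context: A Bruno sequence is a strictly positive monotone real sequence $a=(a_n)_{n\ge0}$ such that $\sum_{k\ge0}|2^{-k}\log a_k|<+\infty$; its phase is $u_n=|2^{-n}\log a_n|$. $\mathcal B^-$ is the set of Bruno sequences of the form $a_n=e^{-2^nu_n}$, $u_n\ge0$. The Bruno transform of a sequence $a$ is the sequence $\hat a$ with terms $\hat a_n=a_0^{1/2}a_1^{1/2^2}\cdots a_n^{1/2^{n+1}}$; for a Bruno sequence it converges to a strictly positive number. *)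

theory Defs
  imports Complex_Main
begin

definition bruno_seq :: "(nat \<Rightarrow> real) \<Rightarrow> bool" where
  "bruno_seq a \<longleftrightarrow> (\<forall>n. a n > 0) \<and> (mono a \<or> antimono a) \<and>
     summable (\<lambda>k. \<bar>ln (a k) / 2 ^ k\<bar>)"

definition bruno_minus :: "(nat \<Rightarrow> real) set" where
  "bruno_minus = {a. bruno_seq a \<and>
     (\<exists>u. (\<forall>n. u n \<ge> 0) \<and> (\<forall>n. a n = exp (- (2 ^ n) * u n)))}"

definition bruno_transform :: "(nat \<Rightarrow> real) \<Rightarrow> nat \<Rightarrow> real" where
  "bruno_transform a n = (\<Prod>k\<le>n. a k powr (1 / 2 ^ (k + 1)))"

definition local_factor :: "real \<Rightarrow> real \<Rightarrow> real \<Rightarrow> real \<Rightarrow> real \<Rightarrow> real" where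
  "local_factor C \<alpha> \<beta> s t = C * s powr (- \<alpha>) * (t - s) powr (- \<beta>)"

end

theory Submission
  imports Defs
begin

text \<open>Since \<open>\<rho> > 0\<close>, \<open>hat\<rho>(n) = exp (\<Sum>k\<le>n. ln \<rho>(k) / 2^(k+1))\<close>, so the Bruno
  condition bounds \<open>hat\<rho>\<close> below by some \<open>A > 0\<close> and \<open>s(n+1) \<ge> t A\<close>. Moreover
  \<open>hat\<rho>(n) - hat\<rho>(n+1) = hat\<rho>(n) (1 - \<rho>(n+1) powr 2^-(n+2))\<close>, and \<open>\<rho>(n+1) < 1/2\<close> makes
  the last factor at least \<open>ln 2 / 2^(n+3)\<close>. Hence \<open>s(n) - s(n+1) \<ge> c / 2^n\<close>, which gives
  \<open>M(s(n+1), s(n)) \<le> C (t A) powr -\<alpha> c powr -\<beta> (2 powr \<beta>)^n\<close>.\<close>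

lemma exp_minus_le_one_minus_half:
  fixes y :: real
  assumes "0 \<le> y" "y \<le> 1"
  shows "exp (- y) \<le> 1 - y / 2"
proof -
  have "exp (- y) \<le> 1 / (1 + y)"
    using exp_ge_add_one_self[of y] assms by (simp add: exp_minus field_simps)
  also have "\<dots> \<le> 1 - y / 2"
    using assms mult_left_le_one_le[of y y] by (simp add: field_simps)
  finally show ?thesis .
qed

lemma bruno_transform_eq_exp:
  assumes "\<And>k. a k > 0"
  shows "bruno_transform a n = exp (\<Sum>k\<le>n. ln (a k) / 2 ^ (k + 1))"
proof -
  have "a k powr (1 / 2 ^ (k + 1)) = exp (ln (a k) / 2 ^ (k + 1))" for k
    using assms[of k] by (simp add: powr_def)
  then show ?thesis
    by (simp add: bruno_transform_def exp_sum)
qed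

lemma bruno_transform_Suc:
  "bruno_transform a (Suc n) = bruno_transform a n * a (Suc n) powr (1 / 2 ^ (n + 2))"
  unfolding bruno_transform_def by simp

lemma bruno_transform_pos:
  assumes "\<And>k. a k > 0"
  shows "bruno_transform a n > 0"
  using assms by (simp add: bruno_transform_eq_exp)

lemma bruno_transform_lower_bound:
  assumes "bruno_seq a"
  shows "exp (- (\<Sum>k. \<bar>ln (a k) / 2 ^ k\<bar>) / 2) \<le> bruno_transform a n"
proof -
  have pos: "\<And>k. a k > 0" and summ: "summable (\<lambda>k. \<bar>ln (a k) / 2 ^ k\<bar>)"
    using assms unfolding bruno_seq_def by auto
  have "- (\<Sum>k. \<bar>ln (a k) / 2 ^ k\<bar>) / 2 \<le> - (\<Sum>k\<le>n. \<bar>ln (a k) / 2 ^ k\<bar>) / 2"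
    using sum_le_suminf[OF summ, of "{..n}"] by simp
  also have "\<dots> = (\<Sum>k\<le>n. - \<bar>ln (a k) / 2 ^ (k + 1)\<bar>)"
    by (simp add: sum_negf sum_divide_distrib mult.commute)
  also have "\<dots> \<le> (\<Sum>k\<le>n. ln (a k) / 2 ^ (k + 1))"
    by (intro sum_mono) linarith
  finally show ?thesis
    by (simp add: bruno_transform_eq_exp pos)
qed

lemma bruno_transform_decrement_ge:
  assumes pos: "\<And>k. a k > 0" and small: "a (Suc n) < 1 / 2"
  shows "bruno_transform a n * (ln 2 / 2 ^ (n + 3)) \<le> bruno_transform a n - bruno_transform a (Suc n)"
proof -
  define x :: real where "x = 1 / 2 ^ (n + 2)"
  have x: "0 < x" "x \<le> 1"
    using one_le_power[of "2::real" "n + 2"] by (auto simp: x_def)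
  have "ln (2::real) \<le> 1"
    using ln_le_minus_one[of 2] by simp
  then have "x * ln 2 \<le> 1"
    using x ln_ge_zero[of 2] by (metis mult_le_one order_less_imp_le one_le_numeral)
  have "a (Suc n) powr x \<le> 1 - x * ln 2 / 2"
  proof -
    have "a (Suc n) powr x \<le> (1 / 2) powr x"
      using pos[of "Suc n"] small x by (intro powr_mono2) auto
    also have "\<dots> = exp (- (x * ln 2))"
      by (simp add: powr_def ln_div)
    also have "\<dots> \<le> 1 - x * ln 2 / 2"
      using \<open>x * ln 2 \<le> 1\<close> x by (intro exp_minus_le_one_minus_half) auto
    finally show ?thesis .
  qed
  then have "x * ln 2 / 2 \<le> 1 - a (Suc n) powr x"
    by simp
  then have "bruno_transform a n * (x * ln 2 / 2) \<le> bruno_transform a n * (1 - a (Suc n) powr x)"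
    using bruno_transform_pos[OF pos] by (intro mult_left_mono) (auto intro: less_imp_le)
  also have "\<dots> = bruno_transform a n - bruno_transform a (Suc n)"
    by (simp add: bruno_transform_Suc x_def algebra_simps)
  finally show ?thesis
    by (simp add: x_def field_simps power_add)
qed

lemma local_factor_le:
  assumes "C \<ge> 0" "\<alpha> \<ge> 0" "\<beta> \<ge> 0" "0 < s'" "s' \<le> s" "0 < d" "d \<le> t - s"
  shows "local_factor C \<alpha> \<beta> s t \<le> C * s' powr (- \<alpha>) * d powr (- \<beta>)"
  unfolding local_factor_def
  using assms by (intro mult_mono powr_mono2') auto

lemma powr_minus_geometric:
  fixes c \<beta> :: real
  assumes "c > 0"
  shows "(c / 2 ^ n) powr (- \<beta>) = c powr (- \<beta>) * (2 powr \<beta>) ^ n"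
  using assms
  by (simp add: powr_divide powr_realpow[symmetric] powr_powr powr_power mult.commute powr_minus_divide)

theorem lemmaL:
  fixes C \<alpha> \<beta> t :: real and \<rho> :: "nat \<Rightarrow> real"
  assumes "C > 0" and "\<alpha> \<ge> 0" and "\<beta> \<ge> 0"
    and "t > 0"
    and "\<rho> \<in> bruno_minus"
    and "\<forall>n. \<rho> n < 1 / 2"
  shows "\<exists>K q. K > 0 \<and> q > 0 \<and>
    (\<forall>n. local_factor C \<alpha> \<beta> (t * bruno_transform \<rho> (Suc n)) (t * bruno_transform \<rho> n)
          \<le> K * q ^ n)"
proof -
  have bruno: "bruno_seq \<rho>" and pos: "\<And>k. \<rho> k > 0"
    using assms(5) unfolding bruno_minus_def bruno_seq_def by auto
  define A where "A = exp (- (\<Sum>k. \<bar>ln (\<rho> k) / 2 ^ k\<bar>) / 2)"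
  define c where "c = t * A * ln 2 / 8"
  have "A > 0" "c > 0"
    using assms(4) by (auto simp: A_def c_def)
  have "local_factor C \<alpha> \<beta> (t * bruno_transform \<rho> (Suc n)) (t * bruno_transform \<rho> n)
      \<le> C * (t * A) powr (- \<alpha>) * c powr (- \<beta>) * (2 powr \<beta>) ^ n" for n
  proof -
    have "A \<le> bruno_transform \<rho> n" "A \<le> bruno_transform \<rho> (Suc n)"
      using bruno_transform_lower_bound[OF bruno] by (simp_all add: A_def)
    have "c / 2 ^ n = t * (A * (ln 2 / 2 ^ (n + 3)))"
      by (simp add: c_def power_add)
    also have "\<dots> \<le> t * (bruno_transform \<rho> n * (ln 2 / 2 ^ (n + 3)))"
      using \<open>A \<le> bruno_transform \<rho> n\<close> assms(4) by (intro mult_left_mono mult_right_mono) auto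
    also have "\<dots> \<le> t * (bruno_transform \<rho> n - bruno_transform \<rho> (Suc n))"
      using bruno_transform_decrement_ge[of \<rho> n, OF pos] assms(4,6)
      by (intro mult_left_mono) auto
    finally show ?thesis
      using local_factor_le[of C \<alpha> \<beta> "t * A" "t * bruno_transform \<rho> (Suc n)" "c / 2 ^ n"]
        assms(1-4) \<open>A > 0\<close> \<open>c > 0\<close> \<open>A \<le> bruno_transform \<rho> (Suc n)\<close>
      by (simp add: powr_minus_geometric right_diff_distrib mult.assoc)
  qed
  moreover have "C * (t * A) powr (- \<alpha>) * c powr (- \<beta>) > 0"
    using assms(1,4) \<open>A > 0\<close> \<open>c > 0\<close> by simp
  ultimately show ?thesis
    by (intro exI[of _ "C * (t * A) powr (- \<alpha>) * c powr (- \<beta>)"] exI[of _ "2 powr \<beta>"]) auto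
qed

end
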